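(* Let $p$ be a prime, $\tau\in\mathbb{Z}$, $a,b$ positive integers, and $\alpha,\beta$ nonnegative integers such that $p^\beta$ exactly divides $\gcd(a,b)$ and $p^\alpha$ divides $a+b$. Then $p^{\alpha-\beta}$ divides \[ \binom{a\tau+a-1}{a}\binom{b\tau+b}{b} \] (i.e. the $p$-adic valuation of this integer is at least $\alpha-\beta$).
   Context: Binomial coefficients with negative top argument are defined by $\binom{n}{k}=(-1)^k\binom{-n+k-1}{k}$ for $n<0$, $k\geq0$. *)

theory Defs
  imports "HOL-Computational_Algebra.Primes"
begin

definition int_binom :: "int \<Rightarrow> nat \<Rightarrow> int" where
  "int_binom n k =
     (if n \<ge> 0 then int (nat n choose k)
      else (-1) ^ k * int (nat (- n + int k - 1) choose k))"

end

theory Submission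
  imports Defs Complex_Main
begin

text \<open>Legendre's formula extends to binomial coefficients with an integer top argument: as long
  as no factor of \<open>n (n - 1) \<cdots> (n - k + 1)\<close> vanishes, the \<open>q\<close>-adic valuation of
  \<open>binom n k\<close> is \<open>\<Sum>\<^sub>j (\<lfloor>n/q\<^sup>j\<rfloor> - \<lfloor>(n-k)/q\<^sup>j\<rfloor> - \<lfloor>k/q\<^sup>j\<rfloor>)\<close>,
  the number of carries when adding \<open>k\<close> to \<open>n - k\<close>, with floor division throughout.
  Write the two binomials as \<open>binom (x + a) a\<close> and \<open>binom (y + b) b\<close> with
  \<open>x = a\<tau> - 1\<close>, \<open>y = b\<tau>\<close>, so that \<open>x + y + 1 = (a + b)\<tau>\<close>. For \<open>\<beta> < j \<le> \<alpha>\<close> the modulus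
  \<open>m = p\<^sup>j\<close> divides \<open>a + b\<close> and \<open>x + y + 1\<close> but not \<open>a\<close>; then the residues satisfy
  \<open>a mod m + b mod m = m\<close> and \<open>x mod m + y mod m \<ge> m - 1\<close>, so at least one of the two
  additions carries at level \<open>j\<close>. This gives at least \<open>\<alpha> - \<beta>\<close> carries in total.\<close>

lemma of_int_int_binom: "(of_int (int_binom n k) :: 'a :: field_char_0) = of_int n gchoose k"
proof (cases "n \<ge> 0")
  case True
  then show ?thesis
    unfolding int_binom_def using binomial_gbinomial[of "nat n" k, where 'a='a] by simp
next
  case False
  then show ?thesis
    unfolding int_binom_def gbinomial_negated_upper[of "of_int n"]
    using binomial_gbinomial[of "nat (- n + int k - 1)" k, where 'a='a] by simp
qed

lemma int_binom_mult_fact: "int_binom n k * fact k = (\<Prod>i<k. n - int i)"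
proof -
  have "(of_int (int_binom n k * fact k) :: rat) = of_int (\<Prod>i<k. n - int i)"
    using gbinomial_mult_fact'[of "of_int n :: rat" k]
    by (simp add: of_int_int_binom atLeast0LessThan)
  then show ?thesis
    by (simp only: of_int_eq_iff)
qed

lemma div_diff_div_pred:
  fixes m x :: int
  assumes "m > 0"
  shows "x div m - (x - 1) div m = of_bool (m dvd x)"
proof -
  define d u where "d = (x - 1) div m" and "u = (x - 1) mod m"
  have u: "0 \<le> u" "u < m"
    using assms by (simp_all add: u_def)
  have x: "x = (u + 1) + m * d"
    unfolding d_def u_def by (simp add: algebra_simps)
  have "u + 1 = m \<or> u + 1 < m" using u by linarith
  then have "(u + 1) div m = of_bool (m dvd u + 1)"
    using u by (auto simp: zdvd_not_zless)
  then show ?thesis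
    using u unfolding x by (simp add: dvd_add_left_iff)
qed

lemma multiplicity_le_nat_abs:
  fixes q x :: int
  assumes "prime q" "x \<noteq> 0"
  shows "multiplicity q x \<le> nat \<bar>x\<bar>"
proof -
  let ?m = "multiplicity q x"
  have "int ?m < 2 ^ ?m"
    by (metis of_nat_less_numeral_power_cancel_iff less_exp)
  also have "\<dots> \<le> q ^ ?m"
    using prime_ge_2_int[OF assms(1)] by (simp add: power_mono)
  also have "\<dots> = \<bar>q ^ ?m\<bar>"
    using prime_ge_2_int[OF assms(1)] by simp
  also have "\<dots> \<le> \<bar>x\<bar>"
    using assms(2) multiplicity_dvd by (rule dvd_imp_le_int)
  finally show ?thesis by linarith
qed

lemma multiplicity_eq_sum_div_diff:
  fixes q x :: int
  assumes "prime q" "x \<noteq> 0" "nat \<bar>x\<bar> \<le> K"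
  shows "int (multiplicity q x) = (\<Sum>j=1..K. x div q ^ j - (x - 1) div q ^ j)"
proof -
  let ?m = "multiplicity q x"
  have "\<not> is_unit q"
    using assms(1) not_prime_unit by blast
  then have "(\<Sum>j=1..K. x div q ^ j - (x - 1) div q ^ j) = (\<Sum>j=1..K. of_bool (j \<le> ?m))"
    using prime_gt_0_int[OF assms(1)] assms(2)
    by (intro sum.cong) (simp_all add: div_diff_div_pred power_dvd_iff_le_multiplicity)
  also have "\<dots> = int (card ({1..K} \<inter> {..?m}))"
    by (simp add: sum.If_cases Int_def)
  also have "{1..K} \<inter> {..?m} = {1..?m}"
    using multiplicity_le_nat_abs[OF assms(1,2)] assms(3) by auto
  finally show ?thesis by simp
qed

lemma multiplicity_prod_consecutive:
  fixes q n :: int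
  assumes "prime q" "\<And>i. i < k \<Longrightarrow> n - int i \<noteq> 0" "nat \<bar>n - int k\<bar> + k \<le> K"
  shows "int (multiplicity q (\<Prod>i<k. n - int i)) = (\<Sum>j=1..K. n div q ^ j - (n - int k) div q ^ j)"
proof -
  have "multiplicity q (\<Prod>i<k. n - int i) = (\<Sum>i<k. multiplicity q (n - int i))"
    using assms(1,2) by (intro prime_elem_multiplicity_prod_distrib) (auto simp: prime_imp_prime_elem)
  then have "int (multiplicity q (\<Prod>i<k. n - int i)) = (\<Sum>i<k. int (multiplicity q (n - int i)))"
    by simp
  also have "\<dots> = (\<Sum>i<k. \<Sum>j=1..K. (n - int i) div q ^ j - (n - int (Suc i)) div q ^ j)"
  proof (rule sum.cong)
    fix i assume "i \<in> {..<k}"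
    then have "i < k"
      by simp
    then have "n - int i \<noteq> 0" "nat \<bar>n - int i\<bar> \<le> K"
      using assms(2,3) by (simp, linarith)
    moreover have "n - int (Suc i) = n - int i - 1"
      by simp
    ultimately show "int (multiplicity q (n - int i)) =
        (\<Sum>j=1..K. (n - int i) div q ^ j - (n - int (Suc i)) div q ^ j)"
      using multiplicity_eq_sum_div_diff[OF assms(1)] by presburger
  qed simp
  also have "\<dots> = (\<Sum>j=1..K. n div q ^ j - (n - int k) div q ^ j)"
  proof (subst sum.swap, rule sum.cong)
    fix j
    show "(\<Sum>i<k. (n - int i) div q ^ j - (n - int (Suc i)) div q ^ j) = n div q ^ j - (n - int k) div q ^ j"
      using sum_lessThan_telescope'[of "\<lambda>i. (n - int i) div q ^ j" k] by simp
  qed simp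
  finally show ?thesis .
qed

lemma multiplicity_int_binom:
  fixes q n :: int
  assumes "prime q" "int_binom n k \<noteq> 0" "nat \<bar>n - int k\<bar> + k \<le> K"
  shows "int (multiplicity q (int_binom n k)) =
           (\<Sum>j=1..K. n div q ^ j - (n - int k) div q ^ j - int k div q ^ j)"
proof -
  have "(\<Prod>i<k. n - int i) \<noteq> 0"
    using assms(2) by (simp flip: int_binom_mult_fact)
  then have factors: "n - int i \<noteq> 0" if "i < k" for i
    using that by simp
  have "int (multiplicity q (int_binom n k)) + int (multiplicity q (fact k :: int)) =
          int (multiplicity q (int_binom n k * fact k))"
    using prime_elem_multiplicity_mult_distrib[OF prime_imp_prime_elem[OF assms(1)] assms(2) fact_nonzero]
    by simp
  also have "\<dots> = (\<Sum>j=1..K. n div q ^ j - (n - int k) div q ^ j)"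
    unfolding int_binom_mult_fact
    by (rule multiplicity_prod_consecutive[OF assms(1)]) (use factors assms(3) in auto)
  finally have "int (multiplicity q (int_binom n k)) =
      (\<Sum>j=1..K. n div q ^ j - (n - int k) div q ^ j) - int (multiplicity q (fact k :: int))"
    by linarith
  also have "int (multiplicity q (fact k :: int)) = (\<Sum>j=1..K. int k div q ^ j - (int k - int k) div q ^ j)"
  proof -
    have "fact k = (\<Prod>i<k. int k - int i)"
      using int_binom_mult_fact[of "int k" k] by (simp add: int_binom_def)
    then show ?thesis
      using assms(3) by (simp only:) (rule multiplicity_prod_consecutive[OF assms(1)]; simp)
  qed
  finally show ?thesis
    by (simp add: sum_subtractf)
qed

lemma div_add_carry_nonneg:
  fixes m x y :: int
  assumes "m > 0"
  shows "0 \<le> (x + y) div m - x div m - y div m"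
  using div_add1_eq[of x y m] assms by (simp add: pos_imp_zdiv_nonneg_iff)

lemma div_add_carry_ge_one:
  fixes m x y A B :: int
  assumes "m > 0" "m dvd A + B" "\<not> m dvd A" "m dvd x + y + 1"
  shows "1 \<le> ((x + A) div m - x div m - A div m) + ((y + B) div m - y div m - B div m)"
proof -
  define u r w s where "u = x mod m" "r = A mod m" "w = y mod m" "s = B mod m"
  have bounds: "0 \<le> u" "u < m" "0 \<le> r" "r < m" "0 \<le> w" "w < m" "0 \<le> s" "s < m"
    using assms(1) unfolding u_r_w_s_def by simp_all
  moreover have "r \<noteq> 0"
    using assms(3) unfolding u_r_w_s_def by (simp add: dvd_eq_mod_eq_0)
  ultimately have "0 < r"
    by simp
  have "m dvd r + s"
    using assms(2) unfolding u_r_w_s_def by (simp add: dvd_eq_mod_eq_0 mod_add_eq)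
  then have rs: "m \<le> r + s"
    using bounds \<open>0 < r\<close> by (intro zdvd_imp_le) auto
  have "m dvd u + w + 1"
    using assms(4) unfolding u_r_w_s_def by (simp add: dvd_eq_mod_eq_0) (metis mod_add_eq mod_add_left_eq)
  then have uw: "m \<le> u + w + 1"
    using bounds by (intro zdvd_imp_le) auto
  have "m \<le> u + r \<or> m \<le> w + s"
    using rs uw bounds by linarith
  then have "0 < (u + r) div m \<or> 0 < (w + s) div m"
    using assms(1) by (simp add: pos_imp_zdiv_pos_iff)
  moreover have "0 \<le> (u + r) div m" "0 \<le> (w + s) div m"
    using bounds assms(1) by (simp_all add: pos_imp_zdiv_nonneg_iff)
  ultimately show ?thesis
    using div_add1_eq[of x A m] div_add1_eq[of y B m] unfolding u_r_w_s_def by linarith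
qed

lemma sum_div_add_carries_ge:
  fixes q x y A B :: int
  assumes "q > 0" "A + B dvd x + y + 1"
    and "\<And>j. \<beta> < j \<Longrightarrow> j \<le> \<alpha> \<Longrightarrow> q ^ j dvd A + B \<and> \<not> q ^ j dvd A"
    and "\<alpha> \<le> K"
  shows "int (\<alpha> - \<beta>) \<le> (\<Sum>j=1..K. ((x + A) div q ^ j - x div q ^ j - A div q ^ j)
                                  + ((y + B) div q ^ j - y div q ^ j - B div q ^ j))"
    (is "_ \<le> (\<Sum>j=1..K. ?c j)")
proof -
  have "int (\<alpha> - \<beta>) = int (card {\<beta>+1..\<alpha>}) * 1"
    by simp
  also have "\<dots> \<le> (\<Sum>j=\<beta>+1..\<alpha>. ?c j)"
    using assms(1,2,3) dvd_trans
    by (intro sum_bounded_below div_add_carry_ge_one) auto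
  also have "\<dots> \<le> (\<Sum>j=1..K. ?c j)"
    using assms(1,4) by (intro sum_mono2) (auto intro!: add_nonneg_nonneg div_add_carry_nonneg)
  finally show ?thesis .
qed

lemma power_not_dvd_summand:
  fixes p a b :: nat
  assumes "p ^ j dvd a + b" "\<not> p ^ (\<beta> + 1) dvd gcd a b" "\<beta> < j"
  shows "\<not> p ^ j dvd a"
proof
  assume "p ^ j dvd a"
  with assms(1) have "p ^ j dvd gcd a b"
    by (simp add: dvd_add_right_iff)
  moreover have "p ^ (\<beta> + 1) dvd p ^ j"
    using assms(3) by (intro le_imp_power_dvd) simp
  ultimately show False
    using assms(2) dvd_trans by blast
qed

lemma prime_power_dvd_int_binom_prod:
  fixes q x y :: int and a b :: nat
  assumes "prime q" "int a + int b dvd x + y + 1"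
    and "\<And>j. \<beta> < j \<Longrightarrow> j \<le> \<alpha> \<Longrightarrow> q ^ j dvd int a + int b \<and> \<not> q ^ j dvd int a"
  shows "q ^ (\<alpha> - \<beta>) dvd int_binom (x + int a) a * int_binom (y + int b) b"
    (is "_ dvd ?X * ?Y")
proof (cases "?X * ?Y = 0")
  case False
  then have "?X \<noteq> 0" "?Y \<noteq> 0"
    by auto
  define K where "K = nat \<bar>x\<bar> + a + nat \<bar>y\<bar> + b + \<alpha>"
  then have "\<alpha> \<le> K"
    by simp
  have "int (multiplicity q (?X * ?Y)) = int (multiplicity q ?X) + int (multiplicity q ?Y)"
    using prime_elem_multiplicity_mult_distrib[OF prime_imp_prime_elem[OF assms(1)] \<open>?X \<noteq> 0\<close> \<open>?Y \<noteq> 0\<close>]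
    by simp
  also have "\<dots> = (\<Sum>j=1..K. ((x + int a) div q ^ j - x div q ^ j - int a div q ^ j)
                            + ((y + int b) div q ^ j - y div q ^ j - int b div q ^ j))"
    using multiplicity_int_binom[OF assms(1) \<open>?X \<noteq> 0\<close>, of K]
      multiplicity_int_binom[OF assms(1) \<open>?Y \<noteq> 0\<close>, of K]
    by (simp add: K_def sum.distrib)
  also have "\<dots> \<ge> int (\<alpha> - \<beta>)"
    using prime_gt_0_int[OF assms(1)] assms(2,3) \<open>\<alpha> \<le> K\<close> by (rule sum_div_add_carries_ge)
  finally show ?thesis
    by (intro multiplicity_dvd') simp
qed (simp only: dvd_0_right)

theorem lemma4p11:
  fixes p :: nat and \<tau> :: int and a b :: nat and \<alpha> \<beta> :: nat
  assumes "prime p"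
    and "a > 0" and "b > 0"
    and "p ^ \<beta> dvd gcd a b" and "\<not> p ^ (\<beta> + 1) dvd gcd a b"
    and "p ^ \<alpha> dvd a + b"
  shows "int p ^ (\<alpha> - \<beta>) dvd
           int_binom (int a * \<tau> + int a - 1) a * int_binom (int b * \<tau> + int b) b"
proof -
  have carries: "int p ^ j dvd int a + int b \<and> \<not> int p ^ j dvd int a"
    if "\<beta> < j" "j \<le> \<alpha>" for j
  proof -
    have "p ^ j dvd a + b"
      using that(2) assms(6) le_imp_power_dvd dvd_trans by blast
    then show ?thesis
      using power_not_dvd_summand[OF _ assms(5) that(1)]
      by (metis of_nat_add of_nat_power int_dvd_int_iff)
  qed
  have "(int a * \<tau> - 1) + int b * \<tau> + 1 = (int a + int b) * \<tau>"
    by (simp add: algebra_simps)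
  then have "int a + int b dvd (int a * \<tau> - 1) + int b * \<tau> + 1"
    by simp
  from prime_power_dvd_int_binom_prod[OF _ this carries] assms(1)
  show ?thesis
    by (simp add: algebra_simps)
qed

end
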